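(* Let $d\ge3$ and $d^2-d+2\le g\le d^2-1$, and let $A\in SM_d(\mathbb C)^g$ be such that $\mathcal D_A$ is bounded. Then the convex set $\mathcal D_A(1)\subseteq\mathbb R^g$ is not self-dual, i.e. $\mathcal D_A(1)\ne\{x\in\mathbb R^g:\sum_ix_iy_i\le1\ \forall y\in\mathcal D_A(1)\}$. Consequently $\mathcal D_A$ is not self-dual: $\mathcal D_A\neq\mathcal D_A^\circ$.
   Context: $SM_d(\mathbb C)^g$ denotes $g$-tuples of self-adjoint $d\times d$ complex matrices. $\mathcal D_A=\bigcup_n\mathcal D_A(n)$ with $\mathcal D_A(n)=\{X\in SM_n(\mathbb C)^g: I-\sum_iA_i\otimes X_i\succeq0\}$, so $\mathcal D_A(1)=\{x\in\mathbb R^g:I-\sum_ix_iA_i\succeq0\}$. The free polar dual of a matrix convex set $K$ is $K^\circ=\{X\in SM^g:\sum_iY_i\otimes X_i\preceq I\ \forall Y\in K\}$. *)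

theory Defs
  imports "HOL-Analysis.Analysis" "Jordan_Normal_Form.Matrix"
begin

definition hermitian :: "complex mat \<Rightarrow> bool" where
  "hermitian M \<longleftrightarrow> dim_row M = dim_col M \<and>
     (\<forall>i<dim_row M. \<forall>j<dim_row M. M $$ (i,j) = cnj (M $$ (j,i)))"

definition psd :: "complex mat \<Rightarrow> bool" where
  "psd M \<longleftrightarrow> hermitian M \<and>
     (\<forall>v :: nat \<Rightarrow> complex. 0 \<le> Re (\<Sum>i<dim_row M. \<Sum>j<dim_row M. cnj (v i) * M $$ (i,j) * v j))"

definition SM :: "nat \<Rightarrow> nat \<Rightarrow> complex mat list \<Rightarrow> bool" where
  "SM n g X \<longleftrightarrow> length X = g \<and> (\<forall>i<g. X ! i \<in> carrier_mat n n \<and> hermitian (X ! i))"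

definition kron :: "complex mat \<Rightarrow> complex mat \<Rightarrow> complex mat" where
  "kron A B = mat (dim_row A * dim_row B) (dim_col A * dim_col B)
     (\<lambda>(i,j). A $$ (i div dim_row B, j div dim_col B) * B $$ (i mod dim_row B, j mod dim_col B))"

definition pencil :: "complex mat list \<Rightarrow> complex mat list \<Rightarrow> complex mat" where
  "pencil A X = (let N = dim_row (A ! 0) * dim_row (X ! 0) in
     mat N N (\<lambda>(r,c). (if r = c then 1 else 0) - (\<Sum>i<length A. kron (A ! i) (X ! i) $$ (r,c))))"

(* free spectrahedron D_A, as set of pairs (level n, tuple X) with n \<ge> 1 *)
definition free_spec :: "complex mat list \<Rightarrow> (nat \<times> complex mat list) set" where
  "free_spec A = {(n, X). n \<ge> 1 \<and> SM n (length A) X \<and> psd (pencil A X)}"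

definition free_polar :: "nat \<Rightarrow> (nat \<times> complex mat list) set \<Rightarrow> (nat \<times> complex mat list) set" where
  "free_polar g K = {(n, X). n \<ge> 1 \<and> SM n g X \<and> (\<forall>(m, Y) \<in> K. psd (pencil Y X))}"

definition opnorm_le :: "complex mat \<Rightarrow> real \<Rightarrow> bool" where
  "opnorm_le M C \<longleftrightarrow> 0 \<le> C \<and> (\<forall>v :: nat \<Rightarrow> complex.
     (\<Sum>j<dim_row M. (cmod (\<Sum>k<dim_col M. M $$ (j,k) * v k))\<^sup>2) \<le> C\<^sup>2 * (\<Sum>k<dim_col M. (cmod (v k))\<^sup>2))"

definition free_bounded :: "(nat \<times> complex mat list) set \<Rightarrow> bool" where
  "free_bounded K \<longleftrightarrow> (\<exists>C. \<forall>(n, X) \<in> K. \<forall>i<length X. opnorm_le (X ! i) C)"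

definition spec1 :: "complex mat list \<Rightarrow> real list set" where
  "spec1 A = {x. length x = length A \<and>
     psd (mat (dim_row (A ! 0)) (dim_row (A ! 0)) (\<lambda>(r,c). (if r = c then 1 else 0)
            - (\<Sum>i<length A. complex_of_real (x ! i) * A ! i $$ (r,c))))}"

definition polar_R :: "nat \<Rightarrow> real list set \<Rightarrow> real list set" where
  "polar_R g K = {x. length x = g \<and> (\<forall>y \<in> K. (\<Sum>i<g. x ! i * y ! i) \<le> 1)}"

end

theory Submission
  imports Defs
begin

text \<open>Self-duality, either of \<open>D_A(1)\<close> in \<open>\<real>\<^sup>g\<close> or of the free set \<open>D_A\<close>, forces \<open>D_A(1)\<close>
  to be the closed unit ball of \<open>\<real>\<^sup>g\<close>. At level one this is because the ball is the only
  self-polar set. For the free set, pairing a level-one point with itself gives \<open>|x| \<le> 1\<close>;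
  conversely, for \<open>Y \<in> D_A\<close> the inequality \<open>I - \<Sum> Y\<^sub>i \<otimes> Y\<^sub>i \<succeq> 0\<close> tested on \<open>v \<otimes> v\<close> gives
  \<open>\<Sum> \<langle>v, Y\<^sub>i v\<rangle>\<^sup>2 \<le> |v|\<^sup>4\<close>, so by Cauchy-Schwarz every \<open>x\<close> with \<open>|x| \<le> 1\<close> lies in the
  polar, which is \<open>D_A\<close>.

  On the other hand, the off-diagonal part of \<open>\<Sum> x\<^sub>i A\<^sub>i\<close> depends on \<open>x\<close> through only
  \<open>d(d-1)\<close> real linear forms. For \<open>g \<ge> d(d-1) + 2\<close> there is therefore an orthonormal pair
  \<open>X, Y\<close> on whose span \<open>\<Sum> x\<^sub>i A\<^sub>i\<close> is diagonal, and on that plane \<open>D_A(1)\<close> is an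
  intersection of \<open>d\<close> half-planes, which is never a disc.\<close>

lemma underdetermined_system_has_nonzero_solution:
  fixes c :: "'j \<Rightarrow> 'i \<Rightarrow> 'a::field"
  assumes "finite J" "finite I" "card J < card I"
  shows "\<exists>x. (\<exists>i\<in>I. x i \<noteq> 0) \<and> (\<forall>j\<in>J. (\<Sum>i\<in>I. c j i * x i) = 0)"
  using assms
proof (induction J arbitrary: I c rule: finite_induct)
  case empty
  then show ?case by (intro exI[of _ "\<lambda>_. 1"]) (auto simp: card_gt_0_iff)
next
  case (insert j0 J)
  show ?case
  proof (cases "\<forall>i\<in>I. c j0 i = 0")
    case True
    then show ?thesis using insert.IH[of I c] insert.prems insert.hyps by auto
  next
    case False
    then obtain k where k: "k \<in> I" "c j0 k \<noteq> 0" by auto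
    \<comment> \<open>eliminate the unknown \<open>x k\<close> using equation \<open>j0\<close>\<close>
    define c' where "c' j i = c j i - c j k / c j0 k * c j0 i" for j i
    have "card J < card (I - {k})" using insert.prems insert.hyps k by simp
    then obtain x' where x': "\<exists>i\<in>I - {k}. x' i \<noteq> 0" "\<forall>j\<in>J. (\<Sum>i\<in>I - {k}. c' j i * x' i) = 0"
      using insert.IH[of "I - {k}" c'] insert.prems(1) by blast
    define x where "x = x'(k := - (\<Sum>i\<in>I - {k}. c j0 i * x' i) / c j0 k)"
    have split: "(\<Sum>i\<in>I. f i * x i) = f k * x k + (\<Sum>i\<in>I - {k}. f i * x' i)" for f
      using k(1) insert.prems(1) by (simp add: x_def sum.remove)
    have "(\<Sum>i\<in>I. c j i * x i) = 0" if "j \<in> J" for j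
    proof -
      have "(\<Sum>i\<in>I - {k}. c j i * x' i) = c j k / c j0 k * (\<Sum>i\<in>I - {k}. c j0 i * x' i)"
        using x'(2) that by (simp add: c'_def algebra_simps sum_subtractf sum_distrib_left)
      then show ?thesis using k(2) unfolding split by (simp add: x_def)
    qed
    moreover have "(\<Sum>i\<in>I. c j0 i * x i) = 0" using k(2) unfolding split by (simp add: x_def)
    moreover have "\<exists>i\<in>I. x i \<noteq> 0" using x'(1) by (auto simp: x_def)
    ultimately show ?thesis by blast
  qed
qed

lemma exists_orthonormal_pair_in_kernel:
  fixes C :: "(nat \<Rightarrow> real) set"
  assumes "finite C" "card C + 2 \<le> g"
  obtains X Y where "(\<Sum>i<g. (X i)\<^sup>2) = 1" "(\<Sum>i<g. (Y i)\<^sup>2) = 1" "(\<Sum>i<g. X i * Y i) = 0"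
    "\<And>f. f \<in> C \<Longrightarrow> (\<Sum>i<g. f i * X i) = 0" "\<And>f. f \<in> C \<Longrightarrow> (\<Sum>i<g. f i * Y i) = 0"
proof -
  obtain x where x: "\<exists>i<g. x i \<noteq> 0" "\<forall>f\<in>C. (\<Sum>i<g. f i * x i) = 0"
    using underdetermined_system_has_nonzero_solution[of C "{..<g}" "\<lambda>f. f"] assms by auto
  \<comment> \<open>solving also the equation given by \<open>x\<close> makes \<open>y\<close> orthogonal to \<open>x\<close>\<close>
  have "card (insert x C) < card {..<g}" using assms by (simp add: card_insert_if)
  then obtain y where y: "\<exists>i<g. y i \<noteq> 0" "\<forall>f\<in>insert x C. (\<Sum>i<g. f i * y i) = 0"
    using underdetermined_system_has_nonzero_solution[of "insert x C" "{..<g}" "\<lambda>f. f"] assms by auto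
  define nx where "nx = sqrt (\<Sum>i<g. (x i)\<^sup>2)"
  define ny where "ny = sqrt (\<Sum>i<g. (y i)\<^sup>2)"
  have norm: "(\<Sum>i<g. (z i / sqrt (\<Sum>j<g. (z j)\<^sup>2))\<^sup>2) = 1" if "\<exists>i<g. z i \<noteq> 0" for z :: "nat \<Rightarrow> real"
  proof -
    have "0 < (\<Sum>i<g. (z i)\<^sup>2)" using that by (auto intro: sum_pos2)
    then show ?thesis by (simp add: power_divide sum_divide_distrib[symmetric])
  qed
  have scale: "(\<Sum>i<g. f i * (z i / s)) = (\<Sum>i<g. f i * z i) / s" for f z :: "nat \<Rightarrow> real" and s
    by (simp add: sum_divide_distrib)
  show thesis
  proof (rule that[of "\<lambda>i. x i / nx" "\<lambda>i. y i / ny"])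
    show "(\<Sum>i<g. (x i / nx)\<^sup>2) = 1" unfolding nx_def using x(1) by (rule norm)
    show "(\<Sum>i<g. (y i / ny)\<^sup>2) = 1" unfolding ny_def using y(1) by (rule norm)
    show "(\<Sum>i<g. x i / nx * (y i / ny)) = 0"
      using y(2) scale[of "\<lambda>i. x i / nx" y ny] scale[of y x nx] by (simp add: mult.commute)
    show "(\<Sum>i<g. f i * (x i / nx)) = 0" if "f \<in> C" for f using x(2) that scale by simp
    show "(\<Sum>i<g. f i * (y i / ny)) = 0" if "f \<in> C" for f using y(2) that scale by simp
  qed
qed

lemma sum_mult_le_of_sum_squares_le:
  fixes a b :: "'i \<Rightarrow> real"
  assumes "(\<Sum>i\<in>I. (a i)\<^sup>2) \<le> 1" "(\<Sum>i\<in>I. (b i)\<^sup>2) \<le> N\<^sup>2" "0 \<le> N"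
  shows "(\<Sum>i\<in>I. a i * b i) \<le> N"
proof (rule power2_le_imp_le[OF _ assms(3)])
  have "(\<Sum>i\<in>I. a i * b i)\<^sup>2 \<le> (\<Sum>i\<in>I. (a i)\<^sup>2) * (\<Sum>i\<in>I. (b i)\<^sup>2)"
    by (rule Cauchy_Schwarz_ineq_sum)
  also have "\<dots> \<le> 1 * (\<Sum>i\<in>I. (b i)\<^sup>2)"
    using assms(1) by (rule mult_right_mono) (simp add: sum_nonneg)
  finally show "(\<Sum>i\<in>I. a i * b i)\<^sup>2 \<le> N\<^sup>2" using assms(2) by linarith
qed

lemma halfplane_normal_in_disc:
  fixes a b :: "'r \<Rightarrow> real"
  assumes disc: "\<forall>s t. (\<forall>r\<in>R. s * a r + t * b r \<le> 1) \<longleftrightarrow> s\<^sup>2 + t\<^sup>2 \<le> 1" and "r \<in> R"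
  shows "(a r)\<^sup>2 + (b r)\<^sup>2 \<le> 1"
proof (rule ccontr)
  assume outside: "\<not> (a r)\<^sup>2 + (b r)\<^sup>2 \<le> 1"
  define \<rho> where "\<rho> = sqrt ((a r)\<^sup>2 + (b r)\<^sup>2)"
  have \<rho>: "\<rho> > 1" "\<rho>\<^sup>2 = (a r)\<^sup>2 + (b r)\<^sup>2"
    using outside by (auto simp: \<rho>_def real_less_rsqrt)
  then have "(a r / \<rho>)\<^sup>2 + (b r / \<rho>)\<^sup>2 \<le> 1"
    by (simp add: power_divide add_divide_distrib[symmetric])
  then have "a r / \<rho> * a r + b r / \<rho> * b r \<le> 1" using disc assms(2) by blast
  moreover have "a r / \<rho> * a r + b r / \<rho> * b r = \<rho>\<^sup>2 / \<rho>"
    using \<rho> by (simp add: power2_eq_square add_divide_distrib)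
  ultimately show False using \<rho> by (simp add: power2_eq_square)
qed

lemma halfplane_touches_circle:
  fixes a b :: "'r \<Rightarrow> real"
  assumes "finite R"
    and disc: "\<forall>s t. (\<forall>r\<in>R. s * a r + t * b r \<le> 1) \<longleftrightarrow> s\<^sup>2 + t\<^sup>2 \<le> 1"
    and st: "s\<^sup>2 + t\<^sup>2 = 1"
  shows "\<exists>r\<in>R. 1 \<le> s * a r + t * b r"
proof (rule ccontr)
  assume "\<not> (\<exists>r\<in>R. 1 \<le> s * a r + t * b r)"
  then have below: "\<forall>r\<in>R. s * a r + t * b r < 1" by auto
  define m where "m = Max (insert (1/2) ((\<lambda>r. s * a r + t * b r) ` R))"
  have fin: "finite (insert (1/2) ((\<lambda>r. s * a r + t * b r) ` R))" using assms(1) by simp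
  have m_ge: "1/2 \<le> m" "\<forall>r\<in>R. s * a r + t * b r \<le> m"
    unfolding m_def using Max_ge[OF fin] by blast+
  have m_less: "m < 1" unfolding m_def using fin below by simp
  have "(s / m) * a r + (t / m) * b r \<le> 1" if "r \<in> R" for r
    using m_ge that by (simp add: add_divide_distrib[symmetric] pos_divide_le_eq)
  then have "(s / m)\<^sup>2 + (t / m)\<^sup>2 \<le> 1" using disc by blast
  then have "1 / m\<^sup>2 \<le> 1" using st by (simp add: power_divide add_divide_distrib[symmetric])
  then have "1 \<le> m\<^sup>2" using m_ge(1) by (simp add: divide_le_eq)
  moreover have "m\<^sup>2 < 1" using m_ge(1) m_less by (simp add: power_less_one_iff abs_less_iff)
  ultimately show False by simp
qed

text \<open>A description of the disc by finitely many half-planes would force every point of the unit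
  circle to be one of the finitely many normals \<open>(a r, b r)\<close>.\<close>

lemma disc_not_finite_intersection_of_halfplanes:
  fixes a b :: "'r \<Rightarrow> real"
  assumes "finite R"
  shows "\<not> (\<forall>s t. (\<forall>r\<in>R. s * a r + t * b r \<le> 1) \<longleftrightarrow> s\<^sup>2 + t\<^sup>2 \<le> 1)"
proof
  assume disc: "\<forall>s t. (\<forall>r\<in>R. s * a r + t * b r \<le> 1) \<longleftrightarrow> s\<^sup>2 + t\<^sup>2 \<le> 1"
  have "{0..1} \<subseteq> a ` R"
  proof
    fix s :: real
    assume "s \<in> {0..1}"
    define t where "t = sqrt (1 - s\<^sup>2)"
    have st: "s\<^sup>2 + t\<^sup>2 = 1" using \<open>s \<in> {0..1}\<close> by (simp add: t_def power_le_one)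
    then obtain r where r: "r \<in> R" "1 \<le> s * a r + t * b r"
      using halfplane_touches_circle[OF assms disc] by blast
    have "(a r - s)\<^sup>2 + (b r - t)\<^sup>2 = ((a r)\<^sup>2 + (b r)\<^sup>2) - 2 * (s * a r + t * b r) + (s\<^sup>2 + t\<^sup>2)"
      by (simp add: power2_eq_square algebra_simps)
    also have "\<dots> \<le> 0" using halfplane_normal_in_disc[OF disc r(1)] r(2) st by simp
    finally have "a r = s" by (simp add: sum_power2_le_zero_iff)
    then show "s \<in> a ` R" using r(1) by blast
  qed
  then have "finite {0..1::real}" by (rule finite_surj[OF assms])
  then show False using infinite_Icc[of "0::real" 1] by simp
qed

lemma card_strict_upper_pairs: "card {(r,c). r < c \<and> c < (d::nat)} * 2 = d * (d - 1)"
proof (induction d)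
  case 0
  then show ?case by simp
next
  case (Suc d)
  have split: "{(r,c). r < c \<and> c < Suc d} = {(r,c). r < c \<and> c < d} \<union> (\<lambda>r. (r,d)) ` {..<d}" by auto
  have "finite {(r,c). r < c \<and> c < (d::nat)}"
    by (rule finite_subset[of _ "{..<d} \<times> {..<d}"]) auto
  then have "card {(r,c). r < c \<and> c < Suc d} = card {(r,c). r < c \<and> c < d} + d"
    unfolding split by (subst card_Un_disjoint) (auto simp: card_image inj_on_def)
  then show ?case using Suc.IH by (cases d) (auto simp: algebra_simps)
qed

lemma cnj_mult_self: "cnj z * z = complex_of_real ((cmod z)\<^sup>2)"
  by (metis complex_norm_square mult.commute)

definition qform :: "complex mat \<Rightarrow> (nat \<Rightarrow> complex) \<Rightarrow> complex" where
  "qform M v = (\<Sum>i<dim_row M. \<Sum>j<dim_row M. cnj (v i) * M $$ (i,j) * v j)"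

lemma psd_iff_qform: "psd M \<longleftrightarrow> hermitian M \<and> (\<forall>v. 0 \<le> Re (qform M v))"
  unfolding psd_def qform_def ..

lemma hermitianD: "hermitian M \<Longrightarrow> i < dim_row M \<Longrightarrow> j < dim_row M \<Longrightarrow> M $$ (i,j) = cnj (M $$ (j,i))"
  unfolding hermitian_def by blast

lemma hermitian_qform_real:
  assumes "hermitian M"
  shows "Im (qform M v) = 0"
proof -
  let ?n = "dim_row M"
  have "cnj (qform M v) = (\<Sum>i<?n. \<Sum>j<?n. v i * M $$ (j,i) * cnj (v j))"
    using assms unfolding qform_def hermitian_def cnj_sum
    by (intro sum.cong refl) (metis complex_cnj_cnj complex_cnj_mult lessThan_iff)
  also have "\<dots> = qform M v"
    unfolding qform_def by (subst sum.swap) (simp add: mult_ac)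
  finally show ?thesis by (metis cnj.sel(2) neg_equal_zero)
qed

lemma qform_smult:
  assumes "M \<in> carrier_mat n n"
  shows "qform (a \<cdot>\<^sub>m M) v = a * qform M v"
  using assms unfolding qform_def sum_distrib_left index_smult_mat(2)
  by (intro sum.cong refl) (simp add: mult_ac)

lemma qform_identity_minus_sum:
  assumes "\<And>i. i < g \<Longrightarrow> M i \<in> carrier_mat N N"
  shows "qform (mat N N (\<lambda>(r,c). (if r = c then 1 else 0) - (\<Sum>i<g. M i $$ (r,c)))) v
     = complex_of_real (\<Sum>r<N. (cmod (v r))\<^sup>2) - (\<Sum>i<g. qform (M i) v)"
proof -
  have "qform (mat N N (\<lambda>(r,c). (if r = c then 1 else 0) - (\<Sum>i<g. M i $$ (r,c)))) v
      = (\<Sum>r<N. \<Sum>c<N. (if r = c then cnj (v r) * v c else 0) - (\<Sum>i<g. cnj (v r) * M i $$ (r,c) * v c))"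
    unfolding qform_def dim_row_mat
    by (intro sum.cong refl) (simp add: algebra_simps sum_distrib_left sum_distrib_right)
  also have "\<dots> = (\<Sum>r<N. cnj (v r) * v r) - (\<Sum>i<g. \<Sum>r<N. \<Sum>c<N. cnj (v r) * M i $$ (r,c) * v c)"
    by (simp add: sum_subtractf sum.swap[of _ "{..<g}"])
  also have "(\<Sum>r<N. cnj (v r) * v r) = complex_of_real (\<Sum>r<N. (cmod (v r))\<^sup>2)"
    unfolding of_real_sum by (intro sum.cong refl) (rule cnj_mult_self)
  also have "(\<Sum>i<g. \<Sum>r<N. \<Sum>c<N. cnj (v r) * M i $$ (r,c) * v c) = (\<Sum>i<g. qform (M i) v)"
    using assms unfolding qform_def by (intro sum.cong refl) auto
  finally show ?thesis .
qed

lemma psd_diagonal_iff: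
  fixes e :: "nat \<Rightarrow> real"
  shows "psd (mat d d (\<lambda>(r,c). if r = c then complex_of_real (e r) else 0)) \<longleftrightarrow> (\<forall>r<d. 0 \<le> e r)"
proof -
  let ?D = "mat d d (\<lambda>(r,c). if r = c then complex_of_real (e r) else 0)"
  have row: "(\<Sum>c<d. cnj (v r) * ?D $$ (r,c) * v c) = complex_of_real (e r * (cmod (v r))\<^sup>2)"
    if "r < d" for r v
  proof -
    have "(\<Sum>c<d. cnj (v r) * ?D $$ (r,c) * v c) = (\<Sum>c<d. if c = r then e r * (cnj (v r) * v r) else 0)"
      using that by (intro sum.cong refl) auto
    then show ?thesis using that by (simp add: cnj_mult_self)
  qed
  have qform_D: "qform ?D v = complex_of_real (\<Sum>r<d. e r * (cmod (v r))\<^sup>2)" for v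
    unfolding qform_def of_real_sum dim_row_mat using row by (intro sum.cong refl) auto
  have "hermitian ?D" unfolding hermitian_def by auto
  moreover have "(\<forall>v. 0 \<le> Re (qform ?D v)) \<longleftrightarrow> (\<forall>r<d. 0 \<le> e r)"
  proof
    assume nonneg: "\<forall>v. 0 \<le> Re (qform ?D v)"
    show "\<forall>r<d. 0 \<le> e r"
    proof (intro allI impI)
      fix r
      assume "r < d"
      have "(\<Sum>r'<d. e r' * (cmod (if r' = r then 1 else 0))\<^sup>2) = (\<Sum>r'<d. if r' = r then e r' else 0)"
        by (intro sum.cong refl) auto
      then show "0 \<le> e r"
        using nonneg[rule_format, of "\<lambda>i. if i = r then 1 else 0"] \<open>r < d\<close> by (simp add: qform_D)
    qed
  next
    assume "\<forall>r<d. 0 \<le> e r"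
    then show "\<forall>v. 0 \<le> Re (qform ?D v)" by (auto simp: qform_D intro: sum_nonneg)
  qed
  ultimately show ?thesis unfolding psd_iff_qform by blast
qed

lemma hermitian_identity_minus_sum:
  assumes "\<And>i. i < g \<Longrightarrow> M i \<in> carrier_mat N N \<and> hermitian (M i)"
  shows "hermitian (mat N N (\<lambda>(r,c). (if r = c then 1 else 0) - (\<Sum>i<g. M i $$ (r,c))))"
  unfolding hermitian_def
proof (intro conjI allI impI)
  fix r c
  assume "r < dim_row (mat N N (\<lambda>(r,c). (if r = c then 1 else 0) - (\<Sum>i<g. M i $$ (r,c))))"
    and "c < dim_row (mat N N (\<lambda>(r,c). (if r = c then 1 else 0) - (\<Sum>i<g. M i $$ (r,c))))"
  then have rc: "r < N" "c < N" by simp_all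
  have "M i $$ (r,c) = cnj (M i $$ (c,r))" if "i \<in> {..<g}" for i
    by (rule hermitianD) (use assms[of i] that rc in auto)
  then have "(\<Sum>i<g. M i $$ (r,c)) = cnj (\<Sum>i<g. M i $$ (c,r))"
    unfolding cnj_sum by (rule sum.cong[OF refl])
  then show "mat N N (\<lambda>(r,c). (if r = c then 1 else 0) - (\<Sum>i<g. M i $$ (r,c))) $$ (r,c)
      = cnj (mat N N (\<lambda>(r,c). (if r = c then 1 else 0) - (\<Sum>i<g. M i $$ (r,c))) $$ (c,r))"
    using rc by simp
qed simp

lemma hermitian_smult_real:
  assumes "hermitian M"
  shows "hermitian (complex_of_real a \<cdot>\<^sub>m M)"
  unfolding hermitian_def
proof (intro conjI allI impI)
  have square: "dim_row M = dim_col M" using assms unfolding hermitian_def by blast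
  then show "dim_row (complex_of_real a \<cdot>\<^sub>m M) = dim_col (complex_of_real a \<cdot>\<^sub>m M)" by simp
  fix i j
  assume "i < dim_row (complex_of_real a \<cdot>\<^sub>m M)" "j < dim_row (complex_of_real a \<cdot>\<^sub>m M)"
  then show "(complex_of_real a \<cdot>\<^sub>m M) $$ (i,j) = cnj ((complex_of_real a \<cdot>\<^sub>m M) $$ (j,i))"
    using hermitianD[OF assms, of i j] square by simp
qed

lemma add_mult_less_mult:
  fixes a b n p :: nat
  assumes "b < n" "a < p"
  shows "b + a * n < p * n"
proof -
  have "Suc a * n \<le> p * n" using assms(2) by (intro mult_le_mono1) simp
  then show ?thesis using assms(1) by simp
qed

lemma kron_carrier_mat:
  "B \<in> carrier_mat p p' \<Longrightarrow> C \<in> carrier_mat n n' \<Longrightarrow> kron B C \<in> carrier_mat (p * n) (p' * n')"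
  unfolding kron_def by simp

lemma kron_mult_add:
  assumes "B \<in> carrier_mat p p'" "C \<in> carrier_mat n n'"
    and "a < p" "b < n" "a' < p'" "b' < n'"
  shows "kron B C $$ (b + a * n, b' + a' * n') = B $$ (a,a') * C $$ (b,b')"
  using assms add_mult_less_mult[of b n a p] add_mult_less_mult[of b' n' a' p'] unfolding kron_def by simp

lemma kron_scalar:
  assumes "B \<in> carrier_mat p q"
  shows "kron B (mat 1 1 (\<lambda>_. a)) = a \<cdot>\<^sub>m B"
  using assms by (intro eq_matI) (auto simp: kron_def)

lemma qform_kron:
  assumes "B \<in> carrier_mat p p" "C \<in> carrier_mat n n"
  shows "qform (kron B C) (\<lambda>r. v (r div n) * w (r mod n)) = qform B v * qform C w"
proof -
  have "qform (kron B C) (\<lambda>r. v (r div n) * w (r mod n))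
      = (\<Sum>a<p. \<Sum>b<n. \<Sum>a'<p. \<Sum>b'<n. (cnj (v a) * B $$ (a,a') * v a') * (cnj (w b) * C $$ (b,b') * w b'))"
    using assms unfolding qform_def sum_mult_product kron_carrier_mat[OF assms, THEN carrier_matD(1)]
    by (intro sum.cong refl) (simp add: kron_mult_add mult_ac)
  also have "\<dots> = qform B v * qform C w"
    using assms unfolding qform_def by (simp add: sum_product)
  finally show ?thesis .
qed

lemma sum_cmod_square_tensor:
  fixes v w :: "nat \<Rightarrow> complex"
  shows "(\<Sum>r<p * n. (cmod (v (r div n) * w (r mod n)))\<^sup>2) = (\<Sum>a<p. (cmod (v a))\<^sup>2) * (\<Sum>b<n. (cmod (w b))\<^sup>2)"
proof -
  have "(\<Sum>r<p * n. (cmod (v (r div n) * w (r mod n)))\<^sup>2) = (\<Sum>a<p. \<Sum>b<n. (cmod (v a))\<^sup>2 * (cmod (w b))\<^sup>2)"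
    unfolding sum_mult_product by (intro sum.cong refl) (simp add: norm_mult power_mult_distrib)
  then show ?thesis by (simp add: sum_product)
qed

lemma SM_D:
  assumes "SM n g X"
  shows "length X = g" "\<And>i. i < g \<Longrightarrow> X ! i \<in> carrier_mat n n" "\<And>i. i < g \<Longrightarrow> hermitian (X ! i)"
  using assms unfolding SM_def by auto

lemma pencil_eq:
  assumes "SM m g Y" "SM n g X" "0 < g"
  shows "pencil Y X = mat (m * n) (m * n) (\<lambda>(r,c). (if r = c then 1 else 0) - (\<Sum>i<g. kron (Y ! i) (X ! i) $$ (r,c)))"
proof -
  have "dim_row (Y ! 0) = m" "dim_row (X ! 0) = n" "length Y = g"
    using SM_D[OF assms(1)] SM_D[OF assms(2)] assms(3) by auto
  then show ?thesis unfolding pencil_def Let_def by simp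
qed

definition scalar_tuple :: "real list \<Rightarrow> complex mat list" where
  "scalar_tuple x = map (\<lambda>a. mat 1 1 (\<lambda>_. complex_of_real a)) x"

lemma scalar_tuple_nth: "i < length x \<Longrightarrow> scalar_tuple x ! i = mat 1 1 (\<lambda>_. complex_of_real (x ! i))"
  unfolding scalar_tuple_def by simp

lemma SM_scalar_tuple: "length x = g \<Longrightarrow> SM 1 g (scalar_tuple x)"
  unfolding SM_def hermitian_def scalar_tuple_def by auto

lemma pencil_scalar_tuple:
  assumes "SM m g Y" "length x = g" "0 < g"
  shows "pencil Y (scalar_tuple x)
    = mat m m (\<lambda>(r,c). (if r = c then 1 else 0) - (\<Sum>i<g. (complex_of_real (x ! i) \<cdot>\<^sub>m Y ! i) $$ (r,c)))"
proof -
  have "kron (Y ! i) (scalar_tuple x ! i) = complex_of_real (x ! i) \<cdot>\<^sub>m Y ! i" if "i < g" for i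
    unfolding scalar_tuple_nth[OF that[folded assms(2)]] using SM_D(2)[OF assms(1) that] by (rule kron_scalar)
  then have "(\<Sum>i<g. kron (Y ! i) (scalar_tuple x ! i) $$ (r,c)) = (\<Sum>i<g. (complex_of_real (x ! i) \<cdot>\<^sub>m Y ! i) $$ (r,c))"
    for r c by (intro sum.cong refl) simp
  then show ?thesis unfolding pencil_eq[OF assms(1) SM_scalar_tuple[OF assms(2)] assms(3)] by simp
qed

lemma spec1_iff_scalar_tuple_in_free_spec:
  assumes "SM d g A" "length x = g" "0 < g"
  shows "x \<in> spec1 A \<longleftrightarrow> (1, scalar_tuple x) \<in> free_spec A"
proof -
  have "pencil A (scalar_tuple x) = mat d d (\<lambda>(r,c). (if r = c then 1 else 0)
      - (\<Sum>i<g. complex_of_real (x ! i) * A ! i $$ (r,c)))"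
  proof -
    have "dim_row (A ! i) = d" "dim_col (A ! i) = d" if "i < g" for i
      using SM_D(2)[OF assms(1) that] by auto
    then show ?thesis unfolding pencil_scalar_tuple[OF assms] by (intro eq_matI) (auto intro!: sum.cong)
  qed
  moreover have "length A = g" "dim_row (A ! 0) = d" using SM_D(1,2)[OF assms(1)] assms(3) by auto
  ultimately show ?thesis
    using assms(2) SM_scalar_tuple[OF assms(2)] unfolding spec1_def free_spec_def by simp
qed

lemma psd_pencil_scalar_tuple_iff:
  assumes "SM m g Y" "length x = g" "0 < g"
  shows "psd (pencil Y (scalar_tuple x)) \<longleftrightarrow> (\<forall>v. (\<Sum>i<g. x ! i * Re (qform (Y ! i) v)) \<le> (\<Sum>r<m. (cmod (v r))\<^sup>2))"
proof -
  note Y = SM_D[OF assms(1)]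
  have "hermitian (pencil Y (scalar_tuple x))"
    unfolding pencil_scalar_tuple[OF assms] using Y
    by (intro hermitian_identity_minus_sum) (simp add: hermitian_smult_real)
  moreover have "Re (qform (pencil Y (scalar_tuple x)) v) = (\<Sum>r<m. (cmod (v r))\<^sup>2) - (\<Sum>i<g. x ! i * Re (qform (Y ! i) v))" for v
    unfolding pencil_scalar_tuple[OF assms] using Y(2)
    by (subst qform_identity_minus_sum) (auto simp: qform_smult[OF Y(2)] intro!: sum.cong)
  ultimately show ?thesis unfolding psd_iff_qform by (simp add: diff_ge_0_iff_ge)
qed

lemma psd_pencil_self_imp_qform_bound:
  assumes "SM m g Y" "0 < g" "psd (pencil Y Y)"
  shows "(\<Sum>i<g. (Re (qform (Y ! i) v))\<^sup>2) \<le> (\<Sum>r<m. (cmod (v r))\<^sup>2)\<^sup>2"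
proof -
  note Y = SM_D[OF assms(1)]
  \<comment> \<open>test the pencil against the tensor square \<open>v \<otimes> v\<close>\<close>
  let ?u = "\<lambda>r. v (r div m) * v (r mod m)"
  have "qform (kron (Y ! i) (Y ! i)) ?u = complex_of_real ((Re (qform (Y ! i) v))\<^sup>2)" if "i < g" for i
    using Y(2,3)[OF that] hermitian_qform_real[of "Y ! i" v]
    by (simp add: qform_kron power2_eq_square complex_eq_iff)
  then have "(\<Sum>i<g. qform (kron (Y ! i) (Y ! i)) ?u) = complex_of_real (\<Sum>i<g. (Re (qform (Y ! i) v))\<^sup>2)"
    unfolding of_real_sum by (intro sum.cong refl) simp
  moreover have "qform (pencil Y Y) ?u
      = complex_of_real (\<Sum>r<m * m. (cmod (?u r))\<^sup>2) - (\<Sum>i<g. qform (kron (Y ! i) (Y ! i)) ?u)"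
    unfolding pencil_eq[OF assms(1,1,2)] using Y(2) by (intro qform_identity_minus_sum kron_carrier_mat)
  ultimately have "Re (qform (pencil Y Y) ?u) = (\<Sum>r<m. (cmod (v r))\<^sup>2)\<^sup>2 - (\<Sum>i<g. (Re (qform (Y ! i) v))\<^sup>2)"
    unfolding sum_cmod_square_tensor by (simp add: power2_eq_square)
  moreover have "0 \<le> Re (qform (pencil Y Y) ?u)" using assms(3) unfolding psd_iff_qform by blast
  ultimately show ?thesis by linarith
qed

lemma qform_scalar_tuple_one:
  assumes "i < length x"
  shows "qform (scalar_tuple x ! i) (\<lambda>_. 1) = complex_of_real (x ! i)"
  using assms by (simp add: scalar_tuple_nth qform_def)

definition closed_unit_ball :: "nat \<Rightarrow> real list set" where
  "closed_unit_ball g = {x. length x = g \<and> (\<Sum>i<g. (x ! i)\<^sup>2) \<le> 1}"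

lemma self_polar_eq_closed_unit_ball:
  assumes "K = polar_R g K"
  shows "K = closed_unit_ball g"
proof -
  have in_ball: "length x = g \<and> (\<Sum>i<g. (x ! i)\<^sup>2) \<le> 1" if "x \<in> K" for x
    using that assms unfolding polar_R_def by (auto simp: power2_eq_square)
  have "x \<in> polar_R g K" if "x \<in> closed_unit_ball g" for x
    using that in_ball sum_mult_le_of_sum_squares_le[of "\<lambda>i. x ! i" "{..<g}" "\<lambda>i. _ ! i" 1]
    unfolding polar_R_def closed_unit_ball_def by auto
  then show ?thesis using in_ball assms unfolding closed_unit_ball_def by blast
qed

lemma spec1_eq_closed_unit_ball_if_free_self_dual:
  assumes A: "SM d g A" "0 < g" and self_dual: "free_spec A = free_polar g (free_spec A)"
  shows "spec1 A = closed_unit_ball g"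
proof (intro equalityI subsetI)
  fix x
  assume x: "x \<in> spec1 A"
  then have len: "length x = g" using SM_D(1)[OF A(1)] unfolding spec1_def by simp
  have "(1, scalar_tuple x) \<in> free_spec A" using x spec1_iff_scalar_tuple_in_free_spec[OF A(1) len A(2)] by simp
  then have "psd (pencil (scalar_tuple x) (scalar_tuple x))"
    using self_dual unfolding free_polar_def by blast
  then have "\<forall>v. (\<Sum>i<g. x ! i * Re (qform (scalar_tuple x ! i) v)) \<le> (\<Sum>r<1. (cmod (v r))\<^sup>2)"
    using psd_pencil_scalar_tuple_iff[OF SM_scalar_tuple[OF len] len A(2)] by blast
  from this[rule_format, of "\<lambda>_. 1"]
  have "(\<Sum>i<g. x ! i * Re (qform (scalar_tuple x ! i) (\<lambda>_. 1))) \<le> 1" by simp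
  moreover have "(\<Sum>i<g. x ! i * Re (qform (scalar_tuple x ! i) (\<lambda>_. 1))) = (\<Sum>i<g. x ! i * x ! i)"
    using len by (intro sum.cong refl) (simp add: qform_scalar_tuple_one)
  ultimately have "(\<Sum>i<g. x ! i * x ! i) \<le> 1" by simp
  then show "x \<in> closed_unit_ball g" using len unfolding closed_unit_ball_def by (simp add: power2_eq_square)
next
  fix x
  assume "x \<in> closed_unit_ball g"
  then have len: "length x = g" and ball: "(\<Sum>i<g. (x ! i)\<^sup>2) \<le> 1" unfolding closed_unit_ball_def by auto
  have "psd (pencil Y (scalar_tuple x))" if Y: "(m, Y) \<in> free_spec A" for m Y
  proof -
    have SMY: "SM m g Y" using Y SM_D(1)[OF A(1)] unfolding free_spec_def by simp
    have "psd (pencil Y Y)" using Y self_dual unfolding free_polar_def by blast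
    then have "(\<Sum>i<g. (Re (qform (Y ! i) v))\<^sup>2) \<le> (\<Sum>r<m. (cmod (v r))\<^sup>2)\<^sup>2" for v
      by (rule psd_pencil_self_imp_qform_bound[OF SMY A(2)])
    then have "(\<Sum>i<g. x ! i * Re (qform (Y ! i) v)) \<le> (\<Sum>r<m. (cmod (v r))\<^sup>2)" for v
      using ball by (intro sum_mult_le_of_sum_squares_le) (auto intro: sum_nonneg)
    then show ?thesis using psd_pencil_scalar_tuple_iff[OF SMY len A(2)] by blast
  qed
  then have "(1, scalar_tuple x) \<in> free_polar g (free_spec A)"
    using SM_scalar_tuple[OF len] unfolding free_polar_def by blast
  then show "x \<in> spec1 A"
    using self_dual spec1_iff_scalar_tuple_in_free_spec[OF A(1) len A(2)] by simp
qed

definition comb_entry :: "complex mat list \<Rightarrow> nat \<Rightarrow> (nat \<Rightarrow> real) \<Rightarrow> nat \<Rightarrow> nat \<Rightarrow> complex" where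
  "comb_entry A g x r c = (\<Sum>i<g. complex_of_real (x i) * A ! i $$ (r,c))"

lemma comb_entry_linear:
  "comb_entry A g (\<lambda>i. s * x i + t * y i) r c
    = complex_of_real s * comb_entry A g x r c + complex_of_real t * comb_entry A g y r c"
  unfolding comb_entry_def by (simp add: sum.distrib sum_distrib_left algebra_simps)

lemma comb_entry_cnj:
  assumes "SM d g A" "r < d" "c < d"
  shows "comb_entry A g x r c = cnj (comb_entry A g x c r)"
  unfolding comb_entry_def cnj_sum
  using hermitianD[OF SM_D(3)[OF assms(1)], of _ r c] SM_D(2)[OF assms(1)] assms(2,3)
  by (intro sum.cong refl) auto

lemma spec1_of_diagonal:
  assumes A: "SM d g A" "0 < g" "length x = g"
    and diagonal: "\<And>r c. r < d \<Longrightarrow> c < d \<Longrightarrow> r \<noteq> c \<Longrightarrow> comb_entry A g (nth x) r c = 0"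
  shows "x \<in> spec1 A \<longleftrightarrow> (\<forall>r<d. Re (comb_entry A g (nth x) r r) \<le> 1)"
proof -
  have real_diagonal: "comb_entry A g (nth x) r r = complex_of_real (Re (comb_entry A g (nth x) r r))"
    if "r < d" for r
  proof -
    have "Im (comb_entry A g (nth x) r r) = 0"
      using comb_entry_cnj[OF A(1) that that, of "nth x"] by (metis cnj.sel(2) neg_equal_zero)
    then show ?thesis by (simp add: complex_eq_iff)
  qed
  have "length A = g" "dim_row (A ! 0) = d" using SM_D(1,2)[OF A(1)] A(2) by auto
  then have "mat (dim_row (A ! 0)) (dim_row (A ! 0)) (\<lambda>(r,c). (if r = c then 1 else 0)
      - (\<Sum>i<length A. complex_of_real (x ! i) * A ! i $$ (r,c)))
    = mat d d (\<lambda>(r,c). if r = c then complex_of_real (1 - Re (comb_entry A g (nth x) r r)) else 0)"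
    using diagonal real_diagonal by (intro eq_matI) (auto simp: comb_entry_def[symmetric])
  then show ?thesis
    using A(3) \<open>length A = g\<close> unfolding spec1_def by (simp add: psd_diagonal_iff)
qed

lemma comb_entry_offdiagonal_eq_0:
  assumes A: "SM d g A"
    and kernel: "\<And>r c. r < c \<Longrightarrow> c < d \<Longrightarrow>
      (\<Sum>i<g. Re (A ! i $$ (r,c)) * x i) = 0 \<and> (\<Sum>i<g. Im (A ! i $$ (r,c)) * x i) = 0"
    and "r < d" "c < d" "r \<noteq> c"
  shows "comb_entry A g x r c = 0"
proof -
  have upper: "comb_entry A g x r c = 0" if "r < c" "c < d" for r c
    using kernel[OF that] unfolding comb_entry_def by (simp add: complex_eq_iff Re_sum Im_sum mult.commute)
  show ?thesis
  proof (cases "r < c")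
    case True
    then show ?thesis using upper assms by simp
  next
    case False
    then show ?thesis using upper[of c r] comb_entry_cnj[OF A assms(3,4)] assms by simp
  qed
qed

lemma exists_orthonormal_pair_diagonalizing:
  assumes A: "SM d g A" and g: "d * (d - 1) + 2 \<le> g"
  obtains X Y where "(\<Sum>i<g. (X i)\<^sup>2) = 1" "(\<Sum>i<g. (Y i)\<^sup>2) = 1" "(\<Sum>i<g. X i * Y i) = 0"
    "\<And>r c. r < d \<Longrightarrow> c < d \<Longrightarrow> r \<noteq> c \<Longrightarrow> comb_entry A g X r c = 0"
    "\<And>r c. r < d \<Longrightarrow> c < d \<Longrightarrow> r \<noteq> c \<Longrightarrow> comb_entry A g Y r c = 0"
proof -
  define P where "P = {(r,c). r < c \<and> c < d}"
  define C where "C = (\<lambda>(r,c) i. Re (A ! i $$ (r,c))) ` P \<union> (\<lambda>(r,c) i. Im (A ! i $$ (r,c))) ` P"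
  have "finite P" unfolding P_def by (rule finite_subset[of _ "{..<d} \<times> {..<d}"]) auto
  then have "finite C" "card C \<le> card P + card P"
    unfolding C_def by (auto intro: card_Un_le[THEN order_trans] add_mono card_image_le)
  then have "card C + 2 \<le> g" using card_strict_upper_pairs[of d] g unfolding P_def by linarith
  then obtain X Y where XY: "(\<Sum>i<g. (X i)\<^sup>2) = 1" "(\<Sum>i<g. (Y i)\<^sup>2) = 1" "(\<Sum>i<g. X i * Y i) = 0"
    "\<And>f. f \<in> C \<Longrightarrow> (\<Sum>i<g. f i * X i) = 0" "\<And>f. f \<in> C \<Longrightarrow> (\<Sum>i<g. f i * Y i) = 0"
    using exists_orthonormal_pair_in_kernel \<open>finite C\<close> by blast
  have Re_in_C: "(\<lambda>i. Re (A ! i $$ (r,c))) \<in> C" if "r < c" "c < d" for r c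
    using that unfolding C_def P_def by (intro UnI1 image_eqI[where x="(r,c)"]) simp_all
  have Im_in_C: "(\<lambda>i. Im (A ! i $$ (r,c))) \<in> C" if "r < c" "c < d" for r c
    using that unfolding C_def P_def by (intro UnI2 image_eqI[where x="(r,c)"]) simp_all
  show thesis
  proof (rule that[OF XY(1-3)])
    show "comb_entry A g X r c = 0" if "r < d" "c < d" "r \<noteq> c" for r c
      by (rule comb_entry_offdiagonal_eq_0[OF A _ that]) (simp add: XY(4) Re_in_C Im_in_C)
    show "comb_entry A g Y r c = 0" if "r < d" "c < d" "r \<noteq> c" for r c
      by (rule comb_entry_offdiagonal_eq_0[OF A _ that]) (simp add: XY(5) Re_in_C Im_in_C)
  qed
qed

lemma sum_square_orthonormal_comb:
  fixes X Y :: "nat \<Rightarrow> real"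
  assumes "(\<Sum>i<g. (X i)\<^sup>2) = 1" "(\<Sum>i<g. (Y i)\<^sup>2) = 1" "(\<Sum>i<g. X i * Y i) = 0"
  shows "(\<Sum>i<g. (s * X i + t * Y i)\<^sup>2) = s\<^sup>2 + t\<^sup>2"
proof -
  have "(\<Sum>i<g. (s * X i + t * Y i)\<^sup>2) = (\<Sum>i<g. s\<^sup>2 * (X i)\<^sup>2 + 2 * s * t * (X i * Y i) + t\<^sup>2 * (Y i)\<^sup>2)"
    by (intro sum.cong refl) (simp add: power2_eq_square algebra_simps)
  also have "\<dots> = s\<^sup>2 * (\<Sum>i<g. (X i)\<^sup>2) + 2 * s * t * (\<Sum>i<g. X i * Y i) + t\<^sup>2 * (\<Sum>i<g. (Y i)\<^sup>2)"
    by (simp add: sum.distrib sum_distrib_left)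
  finally show ?thesis using assms by simp
qed

lemma spec1_on_diagonalizing_plane:
  assumes A: "SM d g A" "0 < g"
    and diagonal: "\<And>r c. r < d \<Longrightarrow> c < d \<Longrightarrow> r \<noteq> c \<Longrightarrow> comb_entry A g X r c = 0"
      "\<And>r c. r < d \<Longrightarrow> c < d \<Longrightarrow> r \<noteq> c \<Longrightarrow> comb_entry A g Y r c = 0"
  shows "map (\<lambda>i. s * X i + t * Y i) [0..<g] \<in> spec1 A
    \<longleftrightarrow> (\<forall>r<d. s * Re (comb_entry A g X r r) + t * Re (comb_entry A g Y r r) \<le> 1)"
proof -
  let ?z = "map (\<lambda>i. s * X i + t * Y i) [0..<g]"
  have "comb_entry A g (nth ?z) r c = comb_entry A g (\<lambda>i. s * X i + t * Y i) r c" for r c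
    unfolding comb_entry_def by (intro sum.cong refl) simp
  then have "comb_entry A g (nth ?z) r c
      = complex_of_real s * comb_entry A g X r c + complex_of_real t * comb_entry A g Y r c" for r c
    by (simp only: comb_entry_linear)
  then show ?thesis using spec1_of_diagonal[OF A, of ?z] diagonal by simp
qed

lemma spec1_ne_closed_unit_ball:
  assumes A: "SM d g A" and g: "d * (d - 1) + 2 \<le> g"
  shows "spec1 A \<noteq> closed_unit_ball g"
proof
  assume ball: "spec1 A = closed_unit_ball g"
  obtain X Y where XY: "(\<Sum>i<g. (X i)\<^sup>2) = 1" "(\<Sum>i<g. (Y i)\<^sup>2) = 1" "(\<Sum>i<g. X i * Y i) = 0"
    "\<And>r c. r < d \<Longrightarrow> c < d \<Longrightarrow> r \<noteq> c \<Longrightarrow> comb_entry A g X r c = 0"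
    "\<And>r c. r < d \<Longrightarrow> c < d \<Longrightarrow> r \<noteq> c \<Longrightarrow> comb_entry A g Y r c = 0"
    using exists_orthonormal_pair_diagonalizing[OF A g] by blast
  have "g > 0" using g by simp
  have "(\<forall>r\<in>{..<d}. s * Re (comb_entry A g X r r) + t * Re (comb_entry A g Y r r) \<le> 1)
      \<longleftrightarrow> s\<^sup>2 + t\<^sup>2 \<le> 1" for s t
    using spec1_on_diagonalizing_plane[OF A \<open>g > 0\<close> XY(4,5), of s t] ball
      sum_square_orthonormal_comb[OF XY(1-3), of s t]
    unfolding closed_unit_ball_def by auto
  then show False
    using disc_not_finite_intersection_of_halfplanes[of "{..<d}"
        "\<lambda>r. Re (comb_entry A g X r r)" "\<lambda>r. Re (comb_entry A g Y r r)"]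
    by blast
qed

theorem mainTheorem20:
  fixes d g :: nat and A :: "complex mat list"
  assumes "d \<ge> 3"
    and "d\<^sup>2 - d + 2 \<le> g" and "g \<le> d\<^sup>2 - 1"
    and "SM d g A"
    and "free_bounded (free_spec A)"
  shows "spec1 A \<noteq> polar_R g (spec1 A) \<and> free_spec A \<noteq> free_polar g (free_spec A)"
proof -
  have g: "d * (d - 1) + 2 \<le> g" using assms(2) by (simp add: power2_eq_square diff_mult_distrib2)
  have not_ball: "spec1 A \<noteq> closed_unit_ball g" using assms(4) g by (rule spec1_ne_closed_unit_ball)
  have "spec1 A \<noteq> polar_R g (spec1 A)" using not_ball self_polar_eq_closed_unit_ball by blast
  moreover have "free_spec A \<noteq> free_polar g (free_spec A)"
    using not_ball spec1_eq_closed_unit_ball_if_free_self_dual[OF assms(4)] g by auto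
  ultimately show ?thesis ..
qed

end
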